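(* For every $n\equiv 1$ or $3 \pmod 4$ with $n\ge 7$, there exists a Heffter array $H(n;6)$ (indeed one in which every row and column sums, as integers, to $12n+1$).
   Context: A Heffter array $H(n;k)$ is an $n\times n$ array in which some cells are filled with nonzero integers and the others are empty, such that: each row and each column contains exactly $k$ filled cells; the entries of every row and of every column sum to $0$ modulo $2nk+1$; and for each integer $1\le x\le nk$, exactly one of $x$ or $-x$ appears in the array, and it appears exactly once. *)

theory Defs
  imports Main
begin

text \<open>An n x n partially filled array of integers: cell (i,j) with i,j < n is
  either empty (None) or filled with an integer (Some x). Cells outside the
  n x n range are required to be empty.\<close>

type_synonym parray = "nat \<Rightarrow> nat \<Rightarrow> int option"

definition entry_val :: "int option \<Rightarrow> int" where
  "entry_val c = (case c of None \<Rightarrow> 0 | Some x \<Rightarrow> x)"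

definition row_sum :: "nat \<Rightarrow> parray \<Rightarrow> nat \<Rightarrow> int" where
  "row_sum n A i = (\<Sum>j<n. entry_val (A i j))"

definition col_sum :: "nat \<Rightarrow> parray \<Rightarrow> nat \<Rightarrow> int" where
  "col_sum n A j = (\<Sum>i<n. entry_val (A i j))"

definition heffter :: "nat \<Rightarrow> nat \<Rightarrow> parray \<Rightarrow> bool" where
  "heffter n k A \<longleftrightarrow>
     (\<forall>i j. (n \<le> i \<or> n \<le> j) \<longrightarrow> A i j = None) \<and>
     (\<forall>i j x. A i j = Some x \<longrightarrow> x \<noteq> 0) \<and>
     (\<forall>i<n. card {j. j < n \<and> A i j \<noteq> None} = k) \<and>
     (\<forall>j<n. card {i. i < n \<and> A i j \<noteq> None} = k) \<and>
     (\<forall>i<n. row_sum n A i mod int (2*n*k+1) = 0) \<and>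
     (\<forall>j<n. col_sum n A j mod int (2*n*k+1) = 0) \<and>
     (\<forall>x::int. 1 \<le> x \<and> x \<le> int (n*k) \<longrightarrow>
        card {(i,j). i < n \<and> j < n \<and> (A i j = Some x \<or> A i j = Some (-x))} = 1)"

end

theory Submission
  imports Defs "HOL-Number_Theory.Cong"
begin

text \<open>Fill the cells of the \<open>n \<times> n\<close> array lying on the six cyclic diagonals
  \<open>j - i \<equiv> d (mod n)\<close>, \<open>d \<in> {0, 1, 2, 3, 4, 6}\<close>; since \<open>n \<ge> 7\<close> these are distinct, so
  every row and column has six filled cells. Diagonal \<open>d\<close> carries the values
  \<open>\<plusminus>(b\<^sub>d n + r\<^sub>d(i) + 1)\<close> for \<open>i < n\<close>, where \<open>d \<mapsto> b\<^sub>d\<close> is a bijection onto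
  \<open>{0, \<dots>, 5}\<close> and each \<open>r\<^sub>d\<close> is a cyclic shift, possibly followed by the reflection
  \<open>x \<mapsto> n - 1 - x\<close>; hence the absolute values run exactly once through \<open>1, \<dots>, 6n\<close>.
  Signs and shifts are chosen so that the six entries of every row and of every column
  add up to \<open>12n + 1\<close>.\<close>

lemma mod_eq_iff_cong_nat:
  fixes a b n :: nat
  assumes "b < n"
  shows "a mod n = b \<longleftrightarrow> [a = b] (mod n)"
  using assms by (auto simp: cong_def)

lemma cyclic_offset_iff:
  fixes i j d n :: nat
  assumes "i < n" "j < n" "d < n"
  shows cyclic_offset_iff_right: "(j + n - i) mod n = d \<longleftrightarrow> j = (i + d) mod n"
    and cyclic_offset_iff_left: "(j + n - i) mod n = d \<longleftrightarrow> i = (j + n - d) mod n"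
proof -
  have "(j + n - i) mod n = d \<longleftrightarrow> [j + n - i + i = d + i] (mod n)"
    using assms(3) by (simp add: mod_eq_iff_cong_nat cong_add_rcancel_nat)
  also have "\<dots> \<longleftrightarrow> [j + n = i + d] (mod n)"
    using assms(1) by (simp add: add.commute)
  finally have offset_cong: "(j + n - i) mod n = d \<longleftrightarrow> [j + n = i + d] (mod n)" .
  have "[j + n = i + d] (mod n) \<longleftrightarrow> [j = i + d] (mod n)"
    by (simp add: cong_def)
  then show "(j + n - i) mod n = d \<longleftrightarrow> j = (i + d) mod n"
    using offset_cong assms(2) by (auto simp: cong_def)
  have "[j + n = i + d] (mod n) \<longleftrightarrow> [i + d = j + n - d + d] (mod n)"
    using assms(3) by (simp add: cong_sym_eq)
  also have "\<dots> \<longleftrightarrow> [i = j + n - d] (mod n)"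
    by (rule cong_add_rcancel_nat)
  finally show "(j + n - i) mod n = d \<longleftrightarrow> i = (j + n - d) mod n"
    using offset_cong assms(1) by (auto simp: cong_def)
qed

lemma cyclic_offset_add:
  fixes i d n :: nat
  assumes "i < n" "d < n"
  shows "((i + d) mod n + n - i) mod n = d"
proof -
  have "(i + d) mod n < n" using assms by simp
  with assms show ?thesis by (simp add: cyclic_offset_iff_right)
qed

lemma cyclic_offset_sub:
  fixes j d n :: nat
  assumes "j < n" "d < n"
  shows "(j + n - (j + n - d) mod n) mod n = d"
proof -
  have "(j + n - d) mod n < n" using assms by simp
  with assms show ?thesis by (simp add: cyclic_offset_iff_left)
qed

lemma mod_diff_add_mod:
  fixes j n a b :: nat
  assumes "b \<le> a" "a \<le> n"
  shows "((j + n - a) mod n + b) mod n = (j + n - (a - b)) mod n"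
proof -
  have "((j + n - a) mod n + b) mod n = (j + n - a + b) mod n"
    by (simp add: mod_add_left_eq)
  also have "j + n - a + b = j + n - (a - b)"
    using assms by simp
  finally show ?thesis .
qed

lemma of_nat_reflect: "x < n \<Longrightarrow> int (n - 1 - x) = int n - 1 - int x"
  by (simp add: of_nat_diff)

lemma bij_betw_add_mod: "bij_betw (\<lambda>x. (x + c) mod n) {..<n} {..<n::nat}"
proof -
  have "inj_on (\<lambda>x. (x + c) mod n) {..<n}"
    by (auto simp: inj_on_def cong_def[symmetric] cong_add_rcancel_nat
        intro: cong_less_modulus_unique_nat)
  moreover have "(\<lambda>x. (x + c) mod n) ` {..<n} \<subseteq> {..<n}"
    by auto
  ultimately show ?thesis
    by (simp add: bij_betw_def endo_inj_surj)
qed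

lemma bij_betw_reflect: "bij_betw (\<lambda>x. n - 1 - x) {..<n} {..<n::nat}"
  by (rule bij_betw_byWitness[where f' = "\<lambda>x. n - 1 - x"]) auto

lemma bij_betw_mixed_radix:
  "bij_betw (\<lambda>(c, t). c * n + t) ({..<m} \<times> {..<n}) {..<m * (n::nat)}"
proof (rule bij_betw_byWitness[where f' = "\<lambda>y. (y div n, y mod n)"])
  show "(\<lambda>(c, t). c * n + t) ` ({..<m} \<times> {..<n}) \<subseteq> {..<m * n}"
  proof clarsimp
    fix c t assume "c < m" "t < n"
    then have "c * n + t < (c + 1) * n" by simp
    also have "\<dots> \<le> m * n" using \<open>c < m\<close> by (intro mult_right_mono) auto
    finally show "c * n + t < m * n" .
  qed
  show "(\<lambda>y. (y div n, y mod n)) ` {..<m * n} \<subseteq> {..<m} \<times> {..<n}"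
    by (cases "n = 0") (auto simp: less_mult_imp_div_less)
qed auto

lemma bij_betw_band_residue:
  fixes b :: "'a \<Rightarrow> nat" and r :: "'a \<Rightarrow> nat \<Rightarrow> nat"
  assumes b: "bij_betw b D {..<m}" and r: "\<And>d. d \<in> D \<Longrightarrow> bij_betw (r d) {..<n} {..<n}"
  shows "bij_betw (\<lambda>(d, i). b d * n + r d i) (D \<times> {..<n}) {..<m * n}"
proof -
  have "bij_betw (\<lambda>(d, i). (b d, r d i)) (D \<times> {..<n}) ({..<m} \<times> {..<n})"
  proof (rule bij_betw_imageI)
    show "inj_on (\<lambda>(d, i). (b d, r d i)) (D \<times> {..<n})"
    proof (rule inj_onI, clarify)
      fix d i d' i'
      assume "d \<in> D" "i < n" "d' \<in> D" "i' < n" "b d = b d'" "r d i = r d' i'"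
      moreover from this have "d = d'"
        using bij_betw_imp_inj_on[OF b] by (blast dest: inj_onD)
      ultimately show "d = d' \<and> i = i'"
        using bij_betw_imp_inj_on[OF r] by (blast dest: inj_onD)
    qed
    show "(\<lambda>(d, i). (b d, r d i)) ` (D \<times> {..<n}) = {..<m} \<times> {..<n}"
    proof
      show "(\<lambda>(d, i). (b d, r d i)) ` (D \<times> {..<n}) \<subseteq> {..<m} \<times> {..<n}"
        using bij_betwE[OF b] bij_betwE[OF r] by auto
    next
      show "{..<m} \<times> {..<n} \<subseteq> (\<lambda>(d, i). (b d, r d i)) ` (D \<times> {..<n})"
      proof clarify
        fix c t assume "c < m" "t < n"
        then obtain d where d: "d \<in> D" "b d = c"
          using bij_betw_imp_surj_on[OF b] by (metis imageE lessThan_iff)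
        then obtain i where "i < n" "r d i = t"
          using bij_betw_imp_surj_on[OF r] \<open>t < n\<close> by (metis imageE lessThan_iff)
        with d show "(c, t) \<in> (\<lambda>(d, i). (b d, r d i)) ` (D \<times> {..<n})"
          by force
      qed
    qed
  qed
  from bij_betw_trans[OF this bij_betw_mixed_radix] show ?thesis
    by (simp add: comp_def case_prod_unfold)
qed

lemma card_fiber_bij_betw:
  assumes "bij_betw f A B" "y \<in> B"
  shows "card {a \<in> A. f a = y} = 1"
proof -
  obtain a where "a \<in> A" "f a = y" using assms by (auto simp: bij_betw_def)
  then have "{a \<in> A. f a = y} = {a}"
    using assms(1) by (auto simp: bij_betw_def inj_on_def)
  then show ?thesis by simp
qed

lemma preimage_right_inverse:
  fixes f h :: "nat \<Rightarrow> nat" and g :: "nat \<Rightarrow> nat \<Rightarrow> 'a::comm_monoid_add"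
  assumes h_range: "\<And>d. d < n \<Longrightarrow> h d < n"
    and f_h: "\<And>d. d < n \<Longrightarrow> f (h d) = d"
    and D: "D \<subseteq> {..<n}"
  shows sum_preimage_right_inverse:
      "(\<Sum>x<n. if f x \<in> D then g (f x) x else 0) = (\<Sum>d\<in>D. g d (h d))"
    and card_preimage_right_inverse: "card {x. x < n \<and> f x \<in> D} = card D"
proof -
  have h_inj: "inj_on h {..<n}"
    using f_h by (metis inj_on_inverseI lessThan_iff)
  moreover have h_surj: "h ` {..<n} = {..<n}"
    using h_range h_inj by (intro endo_inj_surj) auto
  ultimately have h_bij: "bij_betw h {..<n} {..<n}"
    by (simp add: bij_betw_def)
  have "(\<Sum>x<n. if f x \<in> D then g (f x) x else 0)
      = (\<Sum>d<n. if f (h d) \<in> D then g (f (h d)) (h d) else 0)"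
    by (rule sum.reindex_bij_betw[OF h_bij, symmetric])
  also have "\<dots> = (\<Sum>d<n. if d \<in> D then g d (h d) else 0)"
    using f_h by (intro sum.cong) auto
  also have "\<dots> = (\<Sum>d\<in>D. g d (h d))"
    using D by (simp add: sum.If_cases Int_absorb1)
  finally show "(\<Sum>x<n. if f x \<in> D then g (f x) x else 0) = (\<Sum>d\<in>D. g d (h d))" .
  have "{x. x < n \<and> f x \<in> D} = h ` D"
  proof
    show "h ` D \<subseteq> {x. x < n \<and> f x \<in> D}"
      using D h_range f_h by auto
    show "{x. x < n \<and> f x \<in> D} \<subseteq> h ` D"
    proof clarify
      fix x assume "x < n" "f x \<in> D"
      moreover obtain d where "d < n" "x = h d"
        using h_surj \<open>x < n\<close> by (metis imageE lessThan_iff)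
      ultimately show "x \<in> h ` D"
        using f_h by auto
    qed
  qed
  moreover have "inj_on h D"
    using h_inj D by (rule inj_on_subset)
  ultimately show "card {x. x < n \<and> f x \<in> D} = card D"
    by (simp add: card_image)
qed

section \<open>Arrays supported on cyclic diagonals\<close>

definition diagonal_array :: "nat \<Rightarrow> nat set \<Rightarrow> (nat \<Rightarrow> nat \<Rightarrow> int) \<Rightarrow> parray" where
  "diagonal_array n D v i j =
     (let d = (j + n - i) mod n in if i < n \<and> j < n \<and> d \<in> D then Some (v d i) else None)"

lemma entry_val_diagonal_array:
  "i < n \<Longrightarrow> j < n \<Longrightarrow> entry_val (diagonal_array n D v i j) =
     (if (j + n - i) mod n \<in> D then v ((j + n - i) mod n) i else 0)"
  by (simp add: diagonal_array_def entry_val_def Let_def)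

lemma diagonal_array_outside: "n \<le> i \<or> n \<le> j \<Longrightarrow> diagonal_array n D v i j = None"
  by (auto simp: diagonal_array_def Let_def)

lemma diagonal_array_SomeD:
  "diagonal_array n D v i j = Some y \<Longrightarrow> \<exists>d\<in>D. i < n \<and> y = v d i"
  by (auto simp: diagonal_array_def Let_def split: if_splits)

lemma row_sum_diagonal_array:
  assumes "i < n" "D \<subseteq> {..<n}"
  shows "row_sum n (diagonal_array n D v) i = (\<Sum>d\<in>D. v d i)"
proof -
  have "row_sum n (diagonal_array n D v) i
      = (\<Sum>j<n. if (j + n - i) mod n \<in> D then v ((j + n - i) mod n) i else 0)"
    unfolding row_sum_def using assms(1) by (simp add: entry_val_diagonal_array)
  also have "\<dots> = (\<Sum>d\<in>D. v d i)"
    by (rule sum_preimage_right_inverse[where f = "\<lambda>j. (j + n - i) mod n"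
          and g = "\<lambda>d _. v d i" and h = "\<lambda>d. (i + d) mod n"])
      (use assms in \<open>simp_all add: cyclic_offset_add\<close>)
  finally show ?thesis .
qed

lemma col_sum_diagonal_array:
  assumes "j < n" "D \<subseteq> {..<n}"
  shows "col_sum n (diagonal_array n D v) j = (\<Sum>d\<in>D. v d ((j + n - d) mod n))"
proof -
  have "col_sum n (diagonal_array n D v) j
      = (\<Sum>i<n. if (j + n - i) mod n \<in> D then v ((j + n - i) mod n) i else 0)"
    unfolding col_sum_def using assms(1) by (simp add: entry_val_diagonal_array)
  also have "\<dots> = (\<Sum>d\<in>D. v d ((j + n - d) mod n))"
    by (rule sum_preimage_right_inverse[where f = "\<lambda>i. (j + n - i) mod n"
          and g = v and h = "\<lambda>d. (j + n - d) mod n"])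
      (use assms in \<open>simp_all add: cyclic_offset_sub\<close>)
  finally show ?thesis .
qed

lemma card_row_diagonal_array:
  assumes "i < n" "D \<subseteq> {..<n}"
  shows "card {j. j < n \<and> diagonal_array n D v i j \<noteq> None} = card D"
proof -
  have "{j. j < n \<and> diagonal_array n D v i j \<noteq> None} = {j. j < n \<and> (j + n - i) mod n \<in> D}"
    using assms(1) by (auto simp: diagonal_array_def Let_def)
  also have "card \<dots> = card D"
    by (rule card_preimage_right_inverse[where h = "\<lambda>d. (i + d) mod n"])
      (use assms in \<open>simp_all add: cyclic_offset_add\<close>)
  finally show ?thesis .
qed

lemma card_col_diagonal_array:
  assumes "j < n" "D \<subseteq> {..<n}"
  shows "card {i. i < n \<and> diagonal_array n D v i j \<noteq> None} = card D"
proof -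
  have "{i. i < n \<and> diagonal_array n D v i j \<noteq> None} = {i. i < n \<and> (j + n - i) mod n \<in> D}"
    using assms(1) by (auto simp: diagonal_array_def Let_def)
  also have "card \<dots> = card D"
    by (rule card_preimage_right_inverse[where h = "\<lambda>d. (j + n - d) mod n"])
      (use assms in \<open>simp_all add: cyclic_offset_sub\<close>)
  finally show ?thesis .
qed

lemma card_cells_diagonal_array:
  assumes D: "D \<subseteq> {..<n}"
  shows "card {(i, j). i < n \<and> j < n \<and> (\<exists>y. diagonal_array n D v i j = Some y \<and> P y)}
       = card {(d, i). d \<in> D \<and> i < n \<and> P (v d i)}"
proof -
  let ?cell = "\<lambda>(d, i). (i, (i + d) mod n)"
  have "{(i, j). i < n \<and> j < n \<and> (\<exists>y. diagonal_array n D v i j = Some y \<and> P y)}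
      = ?cell ` {(d, i). d \<in> D \<and> i < n \<and> P (v d i)}"
  proof (intro equalityI subsetI)
    fix c assume "c \<in> {(i, j). i < n \<and> j < n \<and> (\<exists>y. diagonal_array n D v i j = Some y \<and> P y)}"
    then obtain i j where c: "c = (i, j)" "i < n" "j < n" "(j + n - i) mod n \<in> D"
      and "P (v ((j + n - i) mod n) i)"
      by (auto simp: diagonal_array_def Let_def split: if_splits)
    moreover have "j = (i + (j + n - i) mod n) mod n"
    proof -
      have "(j + n - i) mod n < n" using c by simp
      then show ?thesis using c cyclic_offset_iff_right[of i n j] by blast
    qed
    ultimately show "c \<in> ?cell ` {(d, i). d \<in> D \<and> i < n \<and> P (v d i)}"
      by (intro image_eqI[where x = "((j + n - i) mod n, i)"]) auto
  next
    fix c assume "c \<in> ?cell ` {(d, i). d \<in> D \<and> i < n \<and> P (v d i)}"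
    then obtain d i where "c = (i, (i + d) mod n)" "d \<in> D" "i < n" "P (v d i)"
      by auto
    then show "c \<in> {(i, j). i < n \<and> j < n \<and> (\<exists>y. diagonal_array n D v i j = Some y \<and> P y)}"
      using D by (auto simp: diagonal_array_def Let_def cyclic_offset_add)
  qed
  moreover have "inj_on ?cell {(d, i). d \<in> D \<and> i < n \<and> P (v d i)}"
    using D by (auto simp: inj_on_def) (metis cyclic_offset_add lessThan_iff subsetD)
  ultimately show ?thesis by (simp add: card_image)
qed

lemma heffter_diagonal_array:
  assumes D: "D \<subseteq> {..<n}" "card D = k"
    and nonzero: "\<And>d i. d \<in> D \<Longrightarrow> i < n \<Longrightarrow> v d i \<noteq> 0"
    and rows: "\<And>i. i < n \<Longrightarrow> (\<Sum>d\<in>D. v d i) mod int (2 * n * k + 1) = 0"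
    and cols: "\<And>j. j < n \<Longrightarrow> (\<Sum>d\<in>D. v d ((j + n - d) mod n)) mod int (2 * n * k + 1) = 0"
    and magnitudes: "\<And>x. 1 \<le> x \<Longrightarrow> x \<le> int (n * k) \<Longrightarrow>
      card {(d, i). d \<in> D \<and> i < n \<and> (v d i = x \<or> v d i = - x)} = 1"
  shows "heffter n k (diagonal_array n D v)"
  unfolding heffter_def
proof (intro conjI allI impI)
  show "diagonal_array n D v i j = None" if "n \<le> i \<or> n \<le> j" for i j
    using that by (rule diagonal_array_outside)
  show "x \<noteq> 0" if "diagonal_array n D v i j = Some x" for i j x
    using diagonal_array_SomeD[OF that] nonzero by auto
  show "card {j. j < n \<and> diagonal_array n D v i j \<noteq> None} = k" if "i < n" for i
    using card_row_diagonal_array[OF that D(1)] D(2) by simp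
  show "card {i. i < n \<and> diagonal_array n D v i j \<noteq> None} = k" if "j < n" for j
    using card_col_diagonal_array[OF that D(1)] D(2) by simp
  show "row_sum n (diagonal_array n D v) i mod int (2 * n * k + 1) = 0" if "i < n" for i
    using rows[OF that] row_sum_diagonal_array[OF that D(1)] by simp
  show "col_sum n (diagonal_array n D v) j mod int (2 * n * k + 1) = 0" if "j < n" for j
    using cols[OF that] col_sum_diagonal_array[OF that D(1)] by simp
  show "card {(i, j). i < n \<and> j < n
      \<and> (diagonal_array n D v i j = Some x \<or> diagonal_array n D v i j = Some (- x))} = 1"
    if "1 \<le> x \<and> x \<le> int (n * k)" for x
  proof -
    have "{(i, j). i < n \<and> j < n
        \<and> (diagonal_array n D v i j = Some x \<or> diagonal_array n D v i j = Some (- x))}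
      = {(i, j). i < n \<and> j < n \<and> (\<exists>y. diagonal_array n D v i j = Some y \<and> (y = x \<or> y = - x))}"
      by blast
    then show ?thesis
      using card_cells_diagonal_array[OF D(1)] magnitudes that by simp
  qed
qed

section \<open>The six-diagonal construction\<close>

definition heffter6_band :: "nat \<Rightarrow> nat" where
  "heffter6_band d =
     (if d = 0 then 0 else if d = 2 then 1 else if d = 1 then 2 else if d = 4 then 3
      else if d = 6 then 4 else 5)"

definition heffter6_shift :: "nat \<Rightarrow> nat" where
  "heffter6_shift d = (if d = 2 \<or> d = 4 then 1 else if d = 3 \<or> d = 6 then 3 else 0)"

definition heffter6_residue :: "nat \<Rightarrow> nat \<Rightarrow> nat \<Rightarrow> nat" where
  "heffter6_residue n d i =
     (let x = (i + heffter6_shift d) mod n in if d \<in> {0, 3, 4} then n - 1 - x else x)"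

definition heffter6_entry :: "nat \<Rightarrow> nat \<Rightarrow> nat \<Rightarrow> int" where
  "heffter6_entry n d i =
     (if d \<le> 1 then -1 else 1) * int (heffter6_band d * n + heffter6_residue n d i + 1)"

lemma bij_betw_heffter6_band: "bij_betw heffter6_band {0, 1, 2, 3, 4, 6} {..<6}"
  by (auto simp: bij_betw_def heffter6_band_def image_iff)

lemma bij_betw_heffter6_residue: "bij_betw (heffter6_residue n d) {..<n} {..<n}"
proof -
  have reflect: "bij_betw (\<lambda>x. if d \<in> {0, 3, 4} then n - 1 - x else x) {..<n} {..<n}"
  proof (cases "d \<in> {0, 3, 4}")
    case True
    then show ?thesis using bij_betw_reflect[of n] by simp
  next
    case False
    then show ?thesis using bij_betw_id[of "{..<n}"] by (simp add: id_def)
  qed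
  have "heffter6_residue n d
      = (\<lambda>x. if d \<in> {0, 3, 4} then n - 1 - x else x) \<circ> (\<lambda>i. (i + heffter6_shift d) mod n)"
    by (simp add: fun_eq_iff heffter6_residue_def Let_def)
  then show ?thesis
    using bij_betw_trans[OF bij_betw_add_mod reflect] by simp
qed

lemma heffter6_entry_nonzero: "heffter6_entry n d i \<noteq> 0"
  unfolding heffter6_entry_def mult_eq_0_iff of_nat_eq_0_iff by simp

lemma heffter6_entry_eq_pm_iff:
  assumes "1 \<le> x"
  shows "heffter6_entry n d i = x \<or> heffter6_entry n d i = - x
     \<longleftrightarrow> heffter6_band d * n + heffter6_residue n d i = nat x - 1"
proof -
  define M where "M = heffter6_band d * n + heffter6_residue n d i"
  define m where "m = int (M + 1)"
  have "m > 0" by (simp add: m_def)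
  moreover have "heffter6_entry n d i = (if d \<le> 1 then - m else m)"
    by (simp add: heffter6_entry_def M_def m_def)
  ultimately have "heffter6_entry n d i = x \<or> heffter6_entry n d i = - x \<longleftrightarrow> m = x"
    using assms by auto
  also have "\<dots> \<longleftrightarrow> M = nat x - 1"
    using assms unfolding m_def by linarith
  finally show ?thesis unfolding M_def .
qed

lemma card_heffter6_entry_fiber:
  assumes "1 \<le> x" "x \<le> int (6 * n)"
  shows "card {(d, i). d \<in> {0, 1, 2, 3, 4, 6} \<and> i < n
                 \<and> (heffter6_entry n d i = x \<or> heffter6_entry n d i = - x)} = 1"
proof -
  let ?magnitude = "\<lambda>(d, i). heffter6_band d * n + heffter6_residue n d i"
  have "{(d, i). d \<in> {0, 1, 2, 3, 4, 6} \<and> i < n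
           \<and> (heffter6_entry n d i = x \<or> heffter6_entry n d i = - x)}
      = {p \<in> {0, 1, 2, 3, 4, 6} \<times> {..<n}. ?magnitude p = nat x - 1}"
    using assms(1) by (auto simp: heffter6_entry_eq_pm_iff)
  moreover have "bij_betw ?magnitude ({0, 1, 2, 3, 4, 6} \<times> {..<n}) {..<6 * n}"
    by (rule bij_betw_band_residue[OF bij_betw_heffter6_band bij_betw_heffter6_residue])
  ultimately show ?thesis
    using assms by (simp add: card_fiber_bij_betw)
qed

lemma heffter6_entry_simps:
  assumes "x < n"
  shows "heffter6_entry n 0 x = - (int n - int x)"
    and "heffter6_entry n 1 x = - (2 * int n + int x + 1)"
    and "heffter6_entry n 2 x = int n + int ((x + 1) mod n) + 1"
    and "heffter6_entry n 3 x = 6 * int n - int ((x + 3) mod n)"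
    and "heffter6_entry n 4 x = 4 * int n - int ((x + 1) mod n)"
    and "heffter6_entry n 6 x = 4 * int n + int ((x + 3) mod n) + 1"
proof -
  have "(x + 1) mod n < n" "(x + 3) mod n < n"
    using assms by simp_all
  with assms have "int (n - 1 - (x + 1) mod n) = int n - 1 - int ((x + 1) mod n)"
    and "int (n - 1 - (x + 3) mod n) = int n - 1 - int ((x + 3) mod n)"
    by (simp_all only: of_nat_reflect)
  with assms show "heffter6_entry n 0 x = - (int n - int x)"
    and "heffter6_entry n 1 x = - (2 * int n + int x + 1)"
    and "heffter6_entry n 2 x = int n + int ((x + 1) mod n) + 1"
    and "heffter6_entry n 3 x = 6 * int n - int ((x + 3) mod n)"
    and "heffter6_entry n 4 x = 4 * int n - int ((x + 1) mod n)"
    and "heffter6_entry n 6 x = 4 * int n + int ((x + 3) mod n) + 1"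
    by (simp_all add: heffter6_entry_def heffter6_band_def heffter6_residue_def
        heffter6_shift_def)
qed

lemma heffter6_row_sum:
  assumes "i < n"
  shows "(\<Sum>d\<in>{0, 1, 2, 3, 4, 6}. heffter6_entry n d i) = int (12 * n + 1)"
  using heffter6_entry_simps[OF assms] by simp

lemma heffter6_col_sum:
  assumes "7 \<le> n" "j < n"
  shows "(\<Sum>d\<in>{0, 1, 2, 3, 4, 6}. heffter6_entry n d ((j + n - d) mod n)) = int (12 * n + 1)"
proof -
  define x where "x d = (j + n - d) mod n" for d
  have x_lt: "x d < n" for d
    using assms by (simp add: x_def)
  have "x 0 = j" "(x 2 + 1) mod n = x 1" "(x 3 + 3) mod n = j"
    "(x 4 + 1) mod n = x 3" "(x 6 + 3) mod n = x 3"
    using assms mod_diff_add_mod[of 1 2 n j] mod_diff_add_mod[of 3 3 n j]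
      mod_diff_add_mod[of 1 4 n j] mod_diff_add_mod[of 3 6 n j]
    by (simp_all add: x_def)
  then have "(\<Sum>d\<in>{0, 1, 2, 3, 4, 6}. heffter6_entry n d (x d)) = int (12 * n + 1)"
    using heffter6_entry_simps[OF x_lt] heffter6_entry_simps[OF assms(2)] by simp
  then show ?thesis
    by (simp add: x_def)
qed

theorem lemma3p1:
  fixes n :: nat
  assumes "n mod 4 = 1 \<or> n mod 4 = 3" and "n \<ge> 7"
  shows "\<exists>A. heffter n 6 A \<and>
           (\<forall>i<n. row_sum n A i = int (12*n+1)) \<and>
           (\<forall>j<n. col_sum n A j = int (12*n+1))"
proof -
  let ?D = "{0, 1, 2, 3, 4, 6} :: nat set"
  let ?A = "diagonal_array n ?D (heffter6_entry n)"
  have D: "?D \<subseteq> {..<n}"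
    using assms(2) by auto
  have rows: "\<forall>i<n. row_sum n ?A i = int (12*n+1)"
    using row_sum_diagonal_array[OF _ D] heffter6_row_sum by simp
  have cols: "\<forall>j<n. col_sum n ?A j = int (12*n+1)"
    using col_sum_diagonal_array[OF _ D] heffter6_col_sum[OF assms(2)] by simp
  have "heffter n 6 ?A"
  proof (rule heffter_diagonal_array[OF D])
    show "(\<Sum>d\<in>?D. heffter6_entry n d i) mod int (2 * n * 6 + 1) = 0" if "i < n" for i
      using heffter6_row_sum[OF that] by (simp add: mult.commute)
    show "(\<Sum>d\<in>?D. heffter6_entry n d ((j + n - d) mod n)) mod int (2 * n * 6 + 1) = 0"
      if "j < n" for j
      using heffter6_col_sum[OF assms(2) that] by (simp add: mult.commute)
    show "card {(d, i). d \<in> ?D \<and> i < n \<and> (heffter6_entry n d i = x \<or> heffter6_entry n d i = - x)} = 1"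
      if "1 \<le> x" "x \<le> int (n * 6)" for x
      using card_heffter6_entry_fiber[of x n] that by (simp add: mult.commute)
  qed (simp_all add: heffter6_entry_nonzero)
  with rows cols show ?thesis by blast
qed

end
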